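(* Let $D\ge1$, $\beta>0$, $c:\{0,\ldots,D\}\to\mathbb{R}$. If $T_N$ is a random plane tree distributed according to $P_N$ on $\mathbb{T}_N(D)$, then $\left(\frac{\chi_0(T_N)}{N},\frac{\chi_1(T_N)}{N},\ldots,\frac{\chi_D(T_N)}{N}\right)\to p^*$ in probability as $N\to\infty$.
   Context: A plane (ordered) tree is a rooted tree in which the children of each vertex are linearly ordered. $\mathbb{T}_N(D)$ is the set of plane trees on $N$ vertices in which every vertex has at most $D$ children; $\chi_k(T)$ is the number of vertices of $T$ with exactly $k$ children. $H(T)=\sum_{k=0}^D c(k)\chi_k(T)$, $P_N\{T\}=e^{-\beta H(T)}/\sum_{T'\in\mathbb{T}_N(D)}e^{-\beta H(T')}$. $\mathcal{M}=\{p\in[0,1]^{D+1}:\ \sum_{k=0}^D p_k=1,\ \sum_{k=0}^D kp_k=1\}$, $J(p)=\sum_{k=0}^D p_k\ln p_k+\beta\sum_{k=0}^D p_kc(k)$ (with $0\ln0=0$), and $p^*$ is the unique minimizer of $J$ on $\mathcal{M}$. *)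

theory Defs
  imports Complex_Main
begin

datatype ptree = Node "ptree list"

fun nverts :: "ptree \<Rightarrow> nat" where
  "nverts (Node ts) = 1 + sum_list (map nverts ts)"

fun chi :: "nat \<Rightarrow> ptree \<Rightarrow> nat" where
  "chi k (Node ts) = (if length ts = k then 1 else 0) + sum_list (map (chi k) ts)"

fun deg_le :: "nat \<Rightarrow> ptree \<Rightarrow> bool" where
  "deg_le D (Node ts) = (length ts \<le> D \<and> list_all (deg_le D) ts)"

definition trees :: "nat \<Rightarrow> nat \<Rightarrow> ptree set" where
  "trees N D = {T. nverts T = N \<and> deg_le D T}"

definition energy :: "(nat \<Rightarrow> real) \<Rightarrow> nat \<Rightarrow> ptree \<Rightarrow> real" where
  "energy c D T = (\<Sum>k\<le>D. c k * real (chi k T))"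

definition gibbs_prob :: "real \<Rightarrow> (nat \<Rightarrow> real) \<Rightarrow> nat \<Rightarrow> nat \<Rightarrow> ptree set \<Rightarrow> real" where
  "gibbs_prob \<beta> c D N A =
     (\<Sum>T\<in>trees N D \<inter> A. exp (- \<beta> * energy c D T)) /
     (\<Sum>T\<in>trees N D. exp (- \<beta> * energy c D T))"

text \<open>The set M (vectors indexed by 0..D; values at other indices are irrelevant).\<close>
definition Mset :: "nat \<Rightarrow> (nat \<Rightarrow> real) set" where
  "Mset D = {p. (\<forall>k\<le>D. 0 \<le> p k \<and> p k \<le> 1) \<and> (\<Sum>k\<le>D. p k) = 1
                 \<and> (\<Sum>k\<le>D. real k * p k) = 1}"

definition Jfun :: "real \<Rightarrow> (nat \<Rightarrow> real) \<Rightarrow> nat \<Rightarrow> (nat \<Rightarrow> real) \<Rightarrow> real" where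
  "Jfun \<beta> c D p = (\<Sum>k\<le>D. (if p k = 0 then 0 else p k * ln (p k))) + \<beta> * (\<Sum>k\<le>D. p k * c k)"

end

theory Submission
  imports Defs
begin

(* A plane tree is encoded by its Lukasiewicz word: the list of out-degrees in preorder.  This
   is injective, chi k T counts the letters k, the word of a tree in trees N D is a word of
   length N over {0..D}, and every such word satisfying the Lukasiewicz prefix condition
   (forest_word 1, a "tree word") is the word of a tree in trees N D.  Let q be a law on {0..D} with mean 1 and consider the product
   measure word_prob q on words.  Then:
   (1) Chernoff: letter frequencies deviate from q by more than eps with probability at most
       2 (D+1) exp (-t^2 N);
   (2) cycle lemma + Chebyshev + an explicit correcting suffix: a random word is a tree word
       with probability at least C exp (-delta N) / N^2 for every delta > 0;
   (3) for D >= 2, tilting exp (-beta c k) by theta^k yields such a q with all q k > 0, under which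
       the Gibbs measure P_N is word_prob q conditioned on tree words, and Gibbs' inequality shows
       that q is the unique minimiser p of J on M.
   Dividing (1) by (2) gives the theorem for D >= 2; for D = 1 every tree is a path and the
   profile is deterministic. *)

fun luk :: "ptree \<Rightarrow> nat list" where
  "luk (Node ts) = length ts # concat (map luk ts)"

lemma chi_luk: "chi k T = count_list (luk T) k"
  by (induction T) (auto simp: count_list_concat o_def cong: map_cong)

lemma length_luk: "length (luk T) = nverts T"
  by (induction T) (auto simp: length_concat o_def cong: map_cong)

lemma sum_list_concat: "sum_list (concat xss) = sum_list (map sum_list (xss :: 'a::monoid_add list list))"
  by (induction xss) auto

lemma sum_luk: "sum_list (luk T) + 1 = nverts T"
proof (induction T)
  case (Node ts)
  have "sum_list (map nverts ts) = sum_list (map (\<lambda>t. sum_list (luk t) + 1) ts)"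
    using Node by (auto cong: map_cong)
  also have "\<dots> = sum_list (map (\<lambda>t. sum_list (luk t)) ts) + length ts"
    by (induction ts) auto
  finally show ?case by (simp add: sum_list_concat o_def)
qed

lemma deg_le_luk: "deg_le D T \<longleftrightarrow> set (luk T) \<subseteq> {..D}"
  by (induction T) (auto simp: list_all_iff)

lemma luk_forest_prefix_free:
  assumes "length ts = length ts'" and "concat (map luk ts) @ r = concat (map luk ts') @ r'"
  shows "ts = ts' \<and> r = r'"
  using assms
proof (induction "length (concat (map luk ts))" arbitrary: ts ts' r r' rule: less_induct)
  case less
  show ?case
  proof (cases ts)
    case Nil
    then show ?thesis using less.prems by auto
  next
    case (Cons t ts1)
    then obtain t' ts1' where ts': "ts' = t' # ts1'" using less.prems(1) by (cases ts') auto
    obtain cs cs' where t: "t = Node cs" and t': "t' = Node cs'" by (cases t, cases t')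
    from less.prems(2) have lc: "length cs = length cs'"
      and e: "concat (map luk (cs @ ts1)) @ r = concat (map luk (cs' @ ts1')) @ r'"
      by (auto simp: Cons ts' t t')
    have "cs @ ts1 = cs' @ ts1' \<and> r = r'"
      using less.hyps[OF _ _ e] lc less.prems(1) by (simp add: Cons ts' t)
    then show ?thesis using lc by (auto simp: Cons ts' t t')
  qed
qed

lemma inj_luk: "inj luk"
  by (rule injI) (use luk_forest_prefix_free[of "[_]" "[_]" "[]" "[]"] in simp)

(* w is the word of a forest of m trees: the running letter sum stays ahead of the position. *)
definition forest_word :: "nat \<Rightarrow> nat list \<Rightarrow> bool" where
  "forest_word m w \<longleftrightarrow> length w = sum_list w + m \<and> (\<forall>j<length w. j < sum_list (take j w) + m)"

lemma forest_word_decode: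
  assumes "forest_word m w" and "set w \<subseteq> {..D}"
  shows "\<exists>ts. length ts = m \<and> concat (map luk ts) = w \<and> list_all (deg_le D) ts"
  using assms
proof (induction w arbitrary: m)
  case Nil
  then show ?case by (auto simp: forest_word_def)
next
  case (Cons k r)
  have m: "m \<ge> 1" using Cons.prems(1) unfolding forest_word_def by force
  have "forest_word (m - 1 + k) r"
    unfolding forest_word_def
  proof (intro conjI allI impI)
    show "length r = sum_list r + (m - 1 + k)"
      using Cons.prems(1) m by (auto simp: forest_word_def)
    fix j assume "j < length r"
    then have "Suc j < sum_list (take (Suc j) (k # r)) + m"
      using Cons.prems(1) unfolding forest_word_def by (metis length_Cons not_less_eq)
    then show "j < sum_list (take j r) + (m - 1 + k)" using m by simp
  qed
  then obtain ts where ts: "length ts = m - 1 + k" "concat (map luk ts) = r" "list_all (deg_le D) ts"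
    using Cons.IH Cons.prems(2) by auto
  let ?t = "Node (take k ts)"
  have "length (?t # drop k ts) = m" using ts m by simp
  moreover have "concat (map luk (?t # drop k ts)) = k # r"
    using ts(1,2) m by (simp flip: map_append concat_append)
  moreover have "list_all (deg_le D) (?t # drop k ts)"
    using ts Cons.prems(2) by (auto simp: list_all_iff dest: in_set_takeD in_set_dropD)
  ultimately show ?case by blast
qed

definition words :: "nat \<Rightarrow> nat \<Rightarrow> nat list set" where
  "words D N = {w. set w \<subseteq> {..D} \<and> length w = N}"

lemma finite_words [simp]: "finite (words D N)"
  unfolding words_def by (rule finite_lists_length_eq) simp

lemma luk_trees: "T \<in> trees N D \<Longrightarrow> luk T \<in> words D N"
  by (auto simp: trees_def words_def length_luk deg_le_luk)

lemma finite_trees: "finite (trees N D)"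
  by (rule finite_imageD[OF finite_subset[OF _ finite_words[of D N]]])
     (use luk_trees inj_on_subset[OF inj_luk] in auto)

lemma tree_words_luk: "{w \<in> words D N. forest_word 1 w} \<subseteq> luk ` trees N D"
proof
  fix w assume w: "w \<in> {w \<in> words D N. forest_word 1 w}"
  then obtain T where "luk T = w" "deg_le D T"
    using forest_word_decode[of 1 w D] by (auto simp: words_def length_Suc_conv)
  moreover have "nverts T = N" using w \<open>luk T = w\<close> length_luk[of T] by (simp add: words_def)
  ultimately show "w \<in> luk ` trees N D" unfolding trees_def by blast
qed

definition word_prob :: "(nat \<Rightarrow> real) \<Rightarrow> nat list \<Rightarrow> real" where
  "word_prob q w = prod_list (map q w)"

lemma word_prob_append: "word_prob q (u @ v) = word_prob q u * word_prob q v"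
  by (simp add: word_prob_def)

lemma words_0: "words D 0 = {[]}"
  by (auto simp: words_def)

lemma words_Suc: "words D (Suc N) = (\<lambda>(x, w). x # w) ` ({..D} \<times> words D N)"
  by (auto simp: words_def image_iff length_Suc_conv)

lemma sum_words_Suc: "(\<Sum>w\<in>words D (Suc N). f w) = (\<Sum>x\<le>D. \<Sum>w\<in>words D N. f (x # w))"
proof -
  have "inj_on (\<lambda>(x, w). x # w) ({..D} \<times> words D N)" by (auto simp: inj_on_def)
  then have "(\<Sum>w\<in>words D (Suc N). f w) = (\<Sum>(x, w)\<in>{..D} \<times> words D N. f (x # w))"
    unfolding words_Suc by (subst sum.reindex) (auto simp: case_prod_beta)
  then show ?thesis by (simp add: sum.cartesian_product)
qed

lemma sum_prod_words: "(\<Sum>w\<in>words D N. prod_list (map (g :: nat \<Rightarrow> real) w)) = (\<Sum>k\<le>D. g k) ^ N"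
proof (induction N)
  case 0
  then show ?case by (simp add: words_0)
next
  case (Suc N)
  have "(\<Sum>w\<in>words D (Suc N). prod_list (map g w)) = (\<Sum>x\<le>D. g x * (\<Sum>w\<in>words D N. prod_list (map g w)))"
    by (simp add: sum_words_Suc sum_distrib_left)
  then show ?case using Suc by (simp add: sum_distrib_right)
qed

lemma exp_minus_le: 
  fixes t :: real
  assumes "0 \<le> t"
  shows "exp (-t) - 1 \<le> -t + t^2"
proof -
  have "exp (-t) \<le> 1 / (1 + t)"
    using exp_ge_add_one_self[of t] assms by (simp add: exp_minus field_simps)
  also have "\<dots> \<le> 1 - t + t^2"
    using assms by (simp add: field_simps power2_eq_square)
  finally show ?thesis by simp
qed

lemma deviation_cases:
  fixes x a \<epsilon> :: real
  assumes "N > 0" and "\<bar>x / N - a\<bar> > \<epsilon>"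
  shows "x \<ge> N * (a + \<epsilon>) \<or> x \<le> N * (a - \<epsilon>)"
proof -
  have "x / N \<ge> a + \<epsilon> \<or> x / N \<le> a - \<epsilon>" using assms(2) by linarith
  then show ?thesis using assms(1) by (auto simp: pos_le_divide_eq pos_divide_le_eq mult.commute)
qed

lemma sum_Un_le:
  fixes f :: "'a \<Rightarrow> real"
  assumes "finite A" "finite B" "\<And>x. x \<in> A \<union> B \<Longrightarrow> f x \<ge> 0"
  shows "sum f (A \<union> B) \<le> sum f A + sum f B"
  using sum_Un[OF assms(1,2), of f] sum_nonneg[of "A \<inter> B" f] assms(3) by auto

lemma sum_UN_le:
  fixes f :: "'a \<Rightarrow> real"
  assumes "finite I" "\<And>i. i \<in> I \<Longrightarrow> finite (A i)" "\<And>x. x \<in> (\<Union>i\<in>I. A i) \<Longrightarrow> f x \<ge> 0"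
  shows "sum f (\<Union>i\<in>I. A i) \<le> (\<Sum>i\<in>I. sum f (A i))"
  using assms
proof (induction I rule: finite_induct)
  case (insert i I)
  have "sum f (\<Union>i\<in>insert i I. A i) \<le> sum f (A i) + sum f (\<Union>i\<in>I. A i)"
    using insert.prems insert.hyps(1) by (simp, intro sum_Un_le) auto
  also have "\<dots> \<le> sum f (A i) + (\<Sum>i\<in>I. sum f (A i))"
    using insert by (intro add_left_mono insert.IH) auto
  finally show ?case using insert.hyps by simp
qed simp

locale critical_law =
  fixes D :: nat and q :: "nat \<Rightarrow> real"
  assumes q_nonneg: "\<And>k. k \<le> D \<Longrightarrow> q k \<ge> 0"
    and q_sum: "(\<Sum>k\<le>D. q k) = 1"
    and q_mean: "(\<Sum>k\<le>D. real k * q k) = 1"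
begin

lemma q_le1: "k \<le> D \<Longrightarrow> q k \<le> 1"
  using member_le_sum[of k "{..D}" q] q_nonneg q_sum by auto

lemma word_prob_nonneg: "w \<in> words D N \<Longrightarrow> word_prob q w \<ge> 0"
  unfolding word_prob_def words_def by (induction w arbitrary: N) (auto intro!: mult_nonneg_nonneg q_nonneg)

lemma mass_words: "(\<Sum>w\<in>words D N. word_prob q w) = 1"
  unfolding word_prob_def sum_prod_words q_sum by simp

lemma mean_sum: "(\<Sum>w\<in>words D N. word_prob q w * (real (sum_list w) - N)) = 0"
proof (induction N)
  case 0
  then show ?case by (simp add: words_0)
next
  case (Suc N)
  have "(\<Sum>w\<in>words D (Suc N). word_prob q w * (real (sum_list w) - Suc N))
     = (\<Sum>x\<le>D. q x * (\<Sum>w\<in>words D N. word_prob q w * (real (sum_list w) - N))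
                + q x * (real x - 1) * (\<Sum>w\<in>words D N. word_prob q w))"
    by (simp add: sum_words_Suc word_prob_def sum_distrib_left sum.distrib[symmetric] algebra_simps)
  also have "\<dots> = (\<Sum>x\<le>D. real x * q x) - (\<Sum>x\<le>D. q x)"
    using Suc mass_words by (simp add: algebra_simps sum_subtractf)
  finally show ?case using q_sum q_mean by simp
qed

definition variance :: real where
  "variance = (\<Sum>k\<le>D. q k * (real k - 1)^2)"

lemma variance_nonneg: "variance \<ge> 0"
  unfolding variance_def by (intro sum_nonneg mult_nonneg_nonneg q_nonneg) auto

lemma variance_sum: "(\<Sum>w\<in>words D N. word_prob q w * (real (sum_list w) - N)^2) = N * variance"
proof (induction N)
  case 0
  then show ?case by (simp add: words_0)
next
  case (Suc N)
  have step: "word_prob q (x # w) * (real (sum_list (x # w)) - Suc N)^2 =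
     q x * (word_prob q w * (real (sum_list w) - N)^2)
     + 2 * q x * (real x - 1) * (word_prob q w * (real (sum_list w) - N))
     + q x * (real x - 1)^2 * word_prob q w" for x w
    by (simp add: word_prob_def algebra_simps power2_eq_square)
  have "(\<Sum>w\<in>words D (Suc N). word_prob q w * (real (sum_list w) - Suc N)^2)
     = (\<Sum>x\<le>D. q x * (N * variance) + q x * (real x - 1)^2)"
    unfolding sum_words_Suc step
    by (simp add: sum.distrib sum_distrib_left[symmetric] Suc mean_sum mass_words)
  also have "\<dots> = (\<Sum>x\<le>D. q x) * (N * variance) + variance"
    by (simp add: sum.distrib sum_distrib_right variance_def)
  also have "\<dots> = Suc N * variance"
    using q_sum by (simp add: algebra_simps)
  finally show ?case .
qed

lemma mgf_count:
  fixes s :: real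
  assumes "k \<le> D"
  shows "(\<Sum>w\<in>words D N. word_prob q w * exp (s * count_list w k)) = (1 + q k * (exp s - 1)) ^ N"
proof -
  let ?g = "\<lambda>j. q j * exp (s * (if j = k then 1 else 0))"
  have "word_prob q w * exp (s * count_list w k) = prod_list (map ?g w)" for w
    by (induction w) (auto simp: word_prob_def distrib_left exp_add)
  then have "(\<Sum>w\<in>words D N. word_prob q w * exp (s * count_list w k)) = (\<Sum>j\<le>D. ?g j) ^ N"
    by (simp add: sum_prod_words)
  also have "(\<Sum>j\<le>D. ?g j) = (\<Sum>j\<le>D. q j + (if j = k then q k * (exp s - 1) else 0))"
    by (rule sum.cong) (auto simp: algebra_simps)
  also have "\<dots> = 1 + q k * (exp s - 1)"
    using assms by (simp add: sum.distrib q_sum)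
  finally show ?thesis .
qed

lemma mgf_count_le:
  fixes s :: real
  assumes "k \<le> D"
  shows "(\<Sum>w\<in>words D N. word_prob q w * exp (s * count_list w k)) \<le> exp (N * (q k * (exp s - 1)))"
proof -
  have "0 \<le> 1 + q k * (exp s - 1)"
  proof -
    have "0 \<le> exp s * q k" using q_nonneg[OF assms] by simp
    then show ?thesis using q_le1[OF assms] by (simp add: algebra_simps)
  qed
  then have "(1 + q k * (exp s - 1)) ^ N \<le> exp (q k * (exp s - 1)) ^ N"
    by (intro power_mono) simp_all
  then show ?thesis
    unfolding mgf_count[OF assms] by (simp add: exp_of_nat_mult[symmetric])
qed

lemma chernoff:
  fixes s a :: real
  assumes k: "k \<le> D" and A: "A \<subseteq> words D N" and ge: "\<And>w. w \<in> A \<Longrightarrow> s * count_list w k \<ge> a"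
  shows "(\<Sum>w\<in>A. word_prob q w) \<le> exp (N * (q k * (exp s - 1)) - a)"
proof -
  have "(\<Sum>w\<in>A. word_prob q w) \<le> (\<Sum>w\<in>A. word_prob q w * exp (s * count_list w k - a))"
  proof (rule sum_mono)
    fix w assume w: "w \<in> A"
    have "1 \<le> exp (s * count_list w k - a)" using ge[OF w] by simp
    from mult_left_mono[OF this word_prob_nonneg] w A
    show "word_prob q w \<le> word_prob q w * exp (s * count_list w k - a)" by auto
  qed
  also have "\<dots> \<le> (\<Sum>w\<in>words D N. word_prob q w * exp (s * count_list w k - a))"
    using A by (intro sum_mono2) (auto intro!: mult_nonneg_nonneg word_prob_nonneg)
  also have "\<dots> = exp (-a) * (\<Sum>w\<in>words D N. word_prob q w * exp (s * count_list w k))"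
    by (simp add: sum_distrib_left exp_diff exp_minus field_simps)
  also have "\<dots> \<le> exp (-a) * exp (N * (q k * (exp s - 1)))"
    using mgf_count_le[OF k] by (intro mult_left_mono) auto
  finally show ?thesis by (simp add: exp_add[symmetric])
qed

lemma upper_tail:
  assumes k: "k \<le> D" and t: "0 \<le> t" "t \<le> 1" "2 * t \<le> \<epsilon>"
  shows "(\<Sum>w\<in>{w\<in>words D N. real (count_list w k) \<ge> N * (q k + \<epsilon>)}. word_prob q w) \<le> exp (- (N * t^2))"
proof -
  have "(\<Sum>w\<in>{w\<in>words D N. real (count_list w k) \<ge> N * (q k + \<epsilon>)}. word_prob q w)
     \<le> exp (N * (q k * (exp t - 1)) - t * (N * (q k + \<epsilon>)))"
    by (rule chernoff[OF k]) (auto intro: mult_left_mono t)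
  also have "\<dots> \<le> exp (- (N * t^2))"
  proof -
    have "q k * (exp t - 1) \<le> q k * (t + t^2)"
      using exp_bound[OF t(1,2)] q_nonneg[OF k] by (intro mult_left_mono) auto
    moreover have "q k * t^2 \<le> t^2" using q_le1[OF k] mult_right_mono[of "q k" 1 "t^2"] by simp
    ultimately have "q k * (exp t - 1) - t * (q k + \<epsilon>) \<le> - (t^2)"
      using mult_left_mono[OF t(3) t(1)] by (simp add: algebra_simps power2_eq_square)
    from mult_left_mono[OF this, of "real N"] show ?thesis by (simp add: algebra_simps)
  qed
  finally show ?thesis .
qed

lemma lower_tail:
  assumes k: "k \<le> D" and t: "0 \<le> t" "t \<le> 1" "2 * t \<le> \<epsilon>"
  shows "(\<Sum>w\<in>{w\<in>words D N. real (count_list w k) \<le> N * (q k - \<epsilon>)}. word_prob q w) \<le> exp (- (N * t^2))"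
proof -
  have "(\<Sum>w\<in>{w\<in>words D N. real (count_list w k) \<le> N * (q k - \<epsilon>)}. word_prob q w)
     \<le> exp (N * (q k * (exp (-t) - 1)) - (-t) * (N * (q k - \<epsilon>)))"
    by (rule chernoff[OF k]) (auto intro: mult_left_mono t)
  also have "\<dots> \<le> exp (- (N * t^2))"
  proof -
    have "q k * (exp (-t) - 1) \<le> q k * (-t + t^2)"
      using exp_minus_le[OF t(1)] q_nonneg[OF k] by (intro mult_left_mono) auto
    moreover have "q k * t^2 \<le> t^2" using q_le1[OF k] mult_right_mono[of "q k" 1 "t^2"] by simp
    ultimately have "q k * (exp (-t) - 1) + t * (q k - \<epsilon>) \<le> - (t^2)"
      using mult_left_mono[OF t(3) t(1)] by (simp add: algebra_simps power2_eq_square)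
    from mult_left_mono[OF this, of "real N"] show ?thesis by (simp add: algebra_simps)
  qed
  finally show ?thesis .
qed

lemma frequency_deviation:
  assumes N: "N > 0" and t: "0 \<le> t" "t \<le> 1" "2 * t \<le> \<epsilon>"
  shows "(\<Sum>w\<in>{w\<in>words D N. \<exists>k\<le>D. \<bar>real (count_list w k) / N - q k\<bar> > \<epsilon>}. word_prob q w)
           \<le> 2 * (D + 1) * exp (- (N * t^2))"
proof -
  let ?U = "\<lambda>k. {w\<in>words D N. real (count_list w k) \<ge> N * (q k + \<epsilon>)}"
  let ?L = "\<lambda>k. {w\<in>words D N. real (count_list w k) \<le> N * (q k - \<epsilon>)}"
  have "{w\<in>words D N. \<exists>k\<le>D. \<bar>real (count_list w k) / N - q k\<bar> > \<epsilon>} \<subseteq> (\<Union>k\<le>D. ?U k \<union> ?L k)"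
  proof (intro subsetI, elim CollectE conjE exE)
    fix w k assume w: "w \<in> words D N" and k: "k \<le> D" "\<bar>real (count_list w k) / N - q k\<bar> > \<epsilon>"
    then have "real (count_list w k) \<ge> N * (q k + \<epsilon>) \<or> real (count_list w k) \<le> N * (q k - \<epsilon>)"
      using N by (intro deviation_cases) auto
    then show "w \<in> (\<Union>k\<le>D. ?U k \<union> ?L k)" using w k(1) by auto
  qed
  then have "(\<Sum>w\<in>{w\<in>words D N. \<exists>k\<le>D. \<bar>real (count_list w k) / N - q k\<bar> > \<epsilon>}. word_prob q w)
      \<le> (\<Sum>w\<in>(\<Union>k\<le>D. ?U k \<union> ?L k). word_prob q w)"
    by (intro sum_mono2) (auto simp: word_prob_nonneg)
  also have "\<dots> \<le> (\<Sum>k\<le>D. \<Sum>w\<in>?U k \<union> ?L k. word_prob q w)"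
    by (rule sum_UN_le) (auto simp: word_prob_nonneg)
  also have "\<dots> \<le> (\<Sum>k\<le>D. (\<Sum>w\<in>?U k. word_prob q w) + (\<Sum>w\<in>?L k. word_prob q w))"
    by (intro sum_mono sum_Un_le) (auto simp: word_prob_nonneg)
  also have "\<dots> \<le> (\<Sum>k\<le>D. 2 * exp (- (N * t^2)))"
  proof (rule sum_mono)
    fix k assume "k \<in> {..D}"
    then show "(\<Sum>w\<in>?U k. word_prob q w) + (\<Sum>w\<in>?L k. word_prob q w) \<le> 2 * exp (- (N * t^2))"
      using upper_tail[OF _ t, of k N] lower_tail[OF _ t, of k N] by simp
  qed
  finally show ?thesis by (simp add: algebra_simps)
qed

end

lemma first_minimum:
  fixes s :: "nat \<Rightarrow> int"
  assumes "N \<ge> 1"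
  obtains r where "r < N" "\<And>j. j < N \<Longrightarrow> s r \<le> s j" "\<And>j. j < r \<Longrightarrow> s r < s j"
proof -
  define m where "m = Min (s ` {..<N})"
  have "0 \<in> {..<N}" using assms by simp
  then have "m \<in> s ` {..<N}" unfolding m_def by (intro Min_in) auto
  then have ex: "\<exists>j. j < N \<and> s j = m" by auto
  define r where "r = (LEAST j. j < N \<and> s j = m)"
  have r: "r < N" "s r = m" using LeastI_ex[OF ex] unfolding r_def by auto
  have min: "s r \<le> s j" if "j < N" for j
    using that r(2) unfolding m_def by simp
  have "s r < s j" if j: "j < r" for j
  proof -
    have "s j \<noteq> m" using not_less_Least[OF j[unfolded r_def]] j r(1) by auto
    then show ?thesis using min[of j] j r by auto
  qed
  then show thesis using that r(1) min by blast
qed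

(* The cycle lemma: a word of length N with letter sum N - 1 has a rotation that is a tree word,
   namely the one starting at the first position r where the walk
   j |-> (sum of the first j letters) - j attains its minimum. *)
lemma cycle_lemma:
  assumes len: "length w = N" and N: "N \<ge> 1" and sum: "sum_list w + 1 = N"
  shows "\<exists>r<N. forest_word 1 (rotate r w)"
proof -
  define st where "st j = int (sum_list (take j w))" for j
  obtain r where r: "r < N" and min: "\<And>j. j < N \<Longrightarrow> st r - r \<le> st j - j"
    and strict: "\<And>j. j < r \<Longrightarrow> st r - r < st j - j"
    using first_minimum[OF N, of "\<lambda>j. st j - int j"] by blast
  have stN: "st N = int N - 1" using sum len unfolding st_def by simp
  have split: "st N = st r + int (sum_list (drop r w))"
    unfolding st_def using len by (metis append_take_drop_id sum_list_append of_nat_add take_all order_refl)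
  let ?v = "drop r w @ take r w"
  have rot: "rotate r w = ?v" using r len by (simp add: rotate_drop_take)
  have prefix: "l < sum_list (take l ?v) + 1" if l: "l < N" for l
  proof (cases "r + l \<le> N")
    case True
    have "take (r + l) w = take r w @ take l (drop r w)" by (simp add: take_add)
    then have e: "st (r + l) = st r + int (sum_list (take l ?v))"
      using True len by (simp add: st_def)
    show ?thesis
    proof (cases "r + l < N")
      case True
      then show ?thesis using min[OF True] e by simp
    next
      case False
      then have "r > 0" and "r + l = N" using l \<open>r + l \<le> N\<close> by auto
      then show ?thesis using strict[of 0] e stN by (simp add: st_def)
    qed
  next
    case False
    define i where "i = r + l - N"
    have i: "i < r" using False l unfolding i_def by simp
    have "take l ?v = drop r w @ take i w"
      using False len l r unfolding i_def by (auto simp: min_def add.commute)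
    then have "int (sum_list (take l ?v)) = st N - st r + st i"
      using split unfolding st_def by simp
    then show ?thesis using strict[OF i] stN False unfolding i_def by simp
  qed
  have sum_v: "length ?v = sum_list ?v + 1"
    using split stN len r unfolding st_def by simp
  have "forest_word 1 ?v"
    unfolding forest_word_def using sum_v prefix len by simp
  then show ?thesis using r rot by auto
qed

lemma word_prob_rotate: "word_prob q (rotate r w) = word_prob q w"
proof -
  let ?m = "r mod length w"
  have "word_prob q (rotate r w) = word_prob q (drop ?m w) * word_prob q (take ?m w)"
    by (simp add: rotate_drop_take word_prob_append)
  also have "\<dots> = word_prob q (take ?m w @ drop ?m w)"
    by (simp only: word_prob_append mult.commute)
  finally show ?thesis by simp
qed

lemma rotate_words [simp]: "w \<in> words D N \<Longrightarrow> rotate r w \<in> words D N"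
  by (simp add: words_def)

lemma inj_rotate: "inj (rotate r)"
  by (simp add: rotate_def inj_rotate1)

context critical_law begin

(* Every word with letter sum N - 1 is a rotation of a tree word, so the tree words carry at
   least a 1/N fraction of the mass of such words. *)
lemma tree_word_mass_ge:
  assumes N: "N \<ge> 1"
  shows "(\<Sum>w\<in>{w\<in>words D N. sum_list w + 1 = N}. word_prob q w)
           \<le> N * (\<Sum>w\<in>{w\<in>words D N. forest_word 1 w}. word_prob q w)"
proof -
  let ?S = "{w\<in>words D N. sum_list w + 1 = N}" and ?T = "{w\<in>words D N. forest_word 1 w}"
  have "?S \<subseteq> (\<Union>r<N. rotate r ` ?T)"
  proof
    fix w assume w: "w \<in> ?S"
    then obtain r where r: "r < N" "forest_word 1 (rotate r w)"
      using cycle_lemma[of w N] N by (auto simp: words_def)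
    have "((N - r) mod N + r) mod N = 0"
      using r by (simp add: mod_add_left_eq)
    then have "w = rotate ((N - r) mod N) (rotate r w)"
      using w by (simp add: rotate_rotate rotate_id words_def)
    moreover have "rotate r w \<in> ?T" using r w by (auto simp: words_def)
    ultimately show "w \<in> (\<Union>r<N. rotate r ` ?T)" using N by auto
  qed
  then have "(\<Sum>w\<in>?S. word_prob q w) \<le> (\<Sum>w\<in>(\<Union>r<N. rotate r ` ?T). word_prob q w)"
    by (intro sum_mono2) (auto simp: word_prob_rotate intro: word_prob_nonneg)
  also have "\<dots> \<le> (\<Sum>r<N. \<Sum>w\<in>rotate r ` ?T. word_prob q w)"
    by (intro sum_UN_le) (auto simp: word_prob_rotate intro: word_prob_nonneg)
  also have "\<dots> = (\<Sum>r<N. \<Sum>w\<in>?T. word_prob q w)"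
    by (simp add: sum.reindex inj_on_subset[OF inj_rotate] word_prob_rotate)
  finally show ?thesis by simp
qed

end

lemma pigeonhole_sum:
  fixes f :: "'a \<Rightarrow> real" and g :: "'a \<Rightarrow> 'b"
  assumes A: "finite A" and X: "finite X" "X \<noteq> {}" and g: "g ` A \<subseteq> X" and m: "m \<le> sum f A"
  shows "\<exists>x\<in>X. m / card X \<le> sum f {u\<in>A. g u = x}"
proof (rule ccontr)
  assume "\<not> ?thesis"
  then have "sum f A < (\<Sum>x\<in>X. m / card X)"
    unfolding sum.group[OF A X(1) g, symmetric] using X by (intro sum_strict_mono) auto
  also have "\<dots> = m" using X by simp
  finally show False using m by simp
qed

context critical_law begin

(* Chebyshev's inequality for the letter sum, which has mean a and variance a * variance. *)
lemma sum_concentration: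
  assumes H: "H > 0" and small: "real a * variance \<le> real H ^ 2 / 2"
  shows "1 / 2 \<le> (\<Sum>u\<in>{u\<in>words D a. sum_list u \<in> {a - H..a + H}}. word_prob q u)"
proof -
  let ?E = "{u\<in>words D a. sum_list u \<in> {a - H..a + H}}"
  let ?C = "{u\<in>words D a. sum_list u \<notin> {a - H..a + H}}"
  have far: "1 \<le> (real (sum_list u) - a)^2 / real H ^ 2" if "u \<in> ?C" for u
  proof -
    have "real H \<le> \<bar>real (sum_list u) - a\<bar>" using that by auto
    then show ?thesis using H by (simp add: abs_le_square_iff[symmetric])
  qed
  have "(\<Sum>u\<in>?C. word_prob q u) \<le> (\<Sum>u\<in>?C. word_prob q u * ((real (sum_list u) - a)^2 / real H ^ 2))"
    using mult_left_mono[OF far word_prob_nonneg] by (intro sum_mono) auto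
  also have "\<dots> \<le> (\<Sum>u\<in>words D a. word_prob q u * ((real (sum_list u) - a)^2 / real H ^ 2))"
    by (rule sum_mono2) (auto intro!: divide_nonneg_nonneg mult_nonneg_nonneg word_prob_nonneg)
  also have "\<dots> = a * variance / real H ^ 2"
    using variance_sum[of a] by (simp add: sum_divide_distrib[symmetric] times_divide_eq_right)
  also have "\<dots> \<le> 1 / 2" using small H by (simp add: field_simps)
  finally have "(\<Sum>u\<in>?C. word_prob q u) \<le> 1 / 2" .
  moreover have "(\<Sum>u\<in>?E. word_prob q u) + (\<Sum>u\<in>?C. word_prob q u) = 1"
  proof -
    have "?E \<union> ?C = words D a" by blast
    then show ?thesis using mass_words[of a] sum.union_disjoint[of ?E ?C "word_prob q"] by auto
  qed
  ultimately show ?thesis by simp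
qed

lemma sum_window:
  assumes H: "H > 0" and small: "real a * variance \<le> real H ^ 2 / 2"
  shows "\<exists>x. a \<le> x + H \<and> x \<le> a + H \<and>
           1 / (2 * (2 * real H + 1)) \<le> (\<Sum>u\<in>{u\<in>words D a. sum_list u = x}. word_prob q u)"
proof -
  let ?X = "{a - H..a + H}"
  let ?E = "{u\<in>words D a. sum_list u \<in> ?X}"
  have "\<exists>x\<in>?X. 1 / 2 / card ?X \<le> (\<Sum>u\<in>{u\<in>?E. sum_list u = x}. word_prob q u)"
    by (rule pigeonhole_sum[OF _ _ _ _ sum_concentration[OF H small]]) auto
  then obtain x where x: "x \<in> ?X"
    and mass: "1 / 2 / card ?X \<le> (\<Sum>u\<in>{u\<in>?E. sum_list u = x}. word_prob q u)"
    by blast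
  have "card ?X \<le> 2 * H + 1" by simp
  then have "real (card ?X) \<le> 2 * real H + 1" by linarith
  then have "1 / (2 * (2 * real H + 1)) \<le> 1 / 2 / card ?X"
    by (simp add: frac_le)
  also have "\<dots> \<le> (\<Sum>u\<in>{u\<in>words D a. sum_list u = x}. word_prob q u)"
    using mass by (rule order.trans) (rule sum_mono2, auto intro: word_prob_nonneg)
  finally show ?thesis using x by (intro exI[of _ x]) (auto simp: le_diff_conv)
qed

lemma concat_mass:
  "(\<Sum>u\<in>{u\<in>words D a. sum_list u = x}. word_prob q u) * (\<Sum>v\<in>{v\<in>words D b. sum_list v = y}. word_prob q v)
     \<le> (\<Sum>w\<in>{w\<in>words D (a + b). sum_list w = x + y}. word_prob q w)"
proof -
  let ?A = "{u\<in>words D a. sum_list u = x}" and ?B = "{v\<in>words D b. sum_list v = y}"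
  have inj: "inj_on (\<lambda>(u, v). u @ v) (?A \<times> ?B)"
  proof (rule inj_onI)
    fix p p' assume "p \<in> ?A \<times> ?B" "p' \<in> ?A \<times> ?B" "(\<lambda>(u, v). u @ v) p = (\<lambda>(u, v). u @ v) p'"
    moreover obtain u v u' v' where "p = (u, v)" "p' = (u', v')" by fastforce
    ultimately show "p = p'" by (simp add: words_def)
  qed
  have "(\<Sum>u\<in>?A. word_prob q u) * (\<Sum>v\<in>?B. word_prob q v) = (\<Sum>(u, v)\<in>?A \<times> ?B. word_prob q (u @ v))"
    by (simp add: sum_product sum.cartesian_product word_prob_append)
  also have "\<dots> = (\<Sum>w\<in>(\<lambda>(u, v). u @ v) ` (?A \<times> ?B). word_prob q w)"
    using sum.reindex[OF inj, of "word_prob q"] by (simp add: case_prod_beta o_def)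
  also have "\<dots> \<le> (\<Sum>w\<in>{w\<in>words D (a + b). sum_list w = x + y}. word_prob q w)"
  proof (rule sum_mono2)
    show "finite {w\<in>words D (a + b). sum_list w = x + y}" by simp
  qed (auto simp: words_def intro!: word_prob_nonneg[of _ "a + b"])
  finally show ?thesis .
qed

end

(* Choice of the length of the correcting suffix: about eta N, large enough for Chebyshev's
   inequality on the remaining prefix and small compared with N. *)
lemma window_size:
  fixes v \<eta> :: real and N :: nat
  assumes v: "v \<ge> 0" and \<eta>: "0 < \<eta>" "\<eta> \<le> 1/4" and N: "8 \<le> N" "2 * v / \<eta>^2 \<le> N"
  obtains H where "0 < H" "H + 1 \<le> N" "real H \<le> \<eta> * N + 1" "real H \<le> N / 4 + 1"
    "real (N - (H + 1)) * v \<le> real H ^ 2 / 2"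
proof -
  define H where "H = nat \<lceil>\<eta> * N\<rceil>"
  have "real H = of_int \<lceil>\<eta> * N\<rceil>" unfolding H_def using \<eta> by simp
  then have H: "\<eta> * N \<le> H" "H \<le> \<eta> * N + 1" using ceiling_correct[of "\<eta> * N"] by linarith+
  have "\<eta> * N \<le> 1/4 * N" using \<eta> by (intro mult_right_mono) auto
  then have H_small: "real H \<le> N / 4 + 1" using H by linarith
  have "0 < \<eta> * N" using \<eta> N by simp
  then have H_pos: "H > 0" using H(1) by (metis of_nat_0_less_iff order_less_le_trans)
  have HN: "H + 1 \<le> N" using H_small N by linarith
  have "real (N - (H + 1)) * v \<le> N * v"
    using v by (intro mult_right_mono) auto
  also have "\<dots> \<le> N * (\<eta>^2 * N / 2)"
    using N \<eta> by (intro mult_left_mono) (auto simp: field_simps)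
  also have "\<dots> = (\<eta> * N)^2 / 2" by (simp add: power2_eq_square)
  also have "\<dots> \<le> real H ^ 2 / 2" using H \<eta> by (intro divide_right_mono power_mono) auto
  finally show thesis using that H_pos HN H(2) H_small by blast
qed

(* A critical law giving positive weight to the letters 0, 1, 2: every letter sum up to 2b is
   then realised with probability at least qmin^b by a word of length b. *)
locale critical_law_pos = critical_law +
  assumes D_ge2: "D \<ge> 2" and q_012_pos: "q 0 > 0" "q 1 > 0" "q 2 > 0"
begin

definition qmin :: real where
  "qmin = min (q 0) (min (q 1) (q 2))"

lemma qmin_pos: "qmin > 0"
  using q_012_pos unfolding qmin_def by simp

lemma qmin_le1: "qmin \<le> 1"
  using q_le1[of 0] unfolding qmin_def by simp

lemma word_prob_ge_qmin: "set v \<subseteq> {0, 1, 2} \<Longrightarrow> qmin ^ length v \<le> word_prob q v"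
proof (induction v)
  case (Cons x v)
  have "qmin \<le> q x" using Cons.prems unfolding qmin_def by auto
  then show ?case using Cons qmin_pos by (simp add: word_prob_def mult_mono)
qed (simp add: word_prob_def)

lemma explicit_word:
  assumes "y \<le> 2 * b"
  shows "qmin ^ b \<le> (\<Sum>v\<in>{v\<in>words D b. sum_list v = y}. word_prob q v)"
proof -
  define v where "v = replicate (y div 2) 2 @ replicate (y mod 2) 1 @ replicate (b - y div 2 - y mod 2) (0::nat)"
  have "y div 2 + y mod 2 \<le> b" using assms by presburger
  then have len: "length v = b" and sum: "sum_list v = y" and set: "set v \<subseteq> {0, 1, 2}"
    unfolding v_def by (auto simp: sum_list_replicate)
  then have "v \<in> {v\<in>words D b. sum_list v = y}" using D_ge2 unfolding words_def by auto
  then have "word_prob q v \<le> (\<Sum>v\<in>{v\<in>words D b. sum_list v = y}. word_prob q v)"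
    by (rule member_le_sum) (auto intro: word_prob_nonneg)
  then show ?thesis using word_prob_ge_qmin[OF set] len by simp
qed

(* Local lower bound for the letter sum: a typical prefix of length N - H - 1 followed by a
  short explicit correcting suffix of length H + 1. *)
lemma sum_mass_lower_at:
  assumes H: "H > 0" "H + 1 \<le> N" and small: "real (N - (H + 1)) * variance \<le> real H ^ 2 / 2"
  shows "qmin ^ (H + 1) / (2 * (2 * real H + 1)) \<le> (\<Sum>w\<in>{w\<in>words D N. sum_list w + 1 = N}. word_prob q w)"
proof -
  define a where "a = N - (H + 1)"
  obtain x where x: "a \<le> x + H" "x \<le> a + H"
    and Px: "1 / (2 * (2 * real H + 1)) \<le> (\<Sum>u\<in>{u\<in>words D a. sum_list u = x}. word_prob q u)"
    using sum_window[OF H(1) small[folded a_def]] by blast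
  define y where "y = N - 1 - x"
  have y: "y \<le> 2 * (H + 1)" and sums: "a + (H + 1) = N" "x + y = N - 1"
    using x H unfolding a_def y_def by auto
  have "1 / (2 * (2 * real H + 1)) * qmin ^ (H + 1)
      \<le> (\<Sum>u\<in>{u\<in>words D a. sum_list u = x}. word_prob q u) * (\<Sum>v\<in>{v\<in>words D (H + 1). sum_list v = y}. word_prob q v)"
    using Px explicit_word[OF y] qmin_pos by (intro mult_mono) (auto intro!: sum_nonneg word_prob_nonneg)
  also have "\<dots> \<le> (\<Sum>w\<in>{w\<in>words D N. sum_list w = N - 1}. word_prob q w)"
    using concat_mass[of a x "H + 1" y] sums by simp
  also have "\<dots> = (\<Sum>w\<in>{w\<in>words D N. sum_list w + 1 = N}. word_prob q w)"
    using H by (intro sum.cong) auto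
  finally show ?thesis by simp
qed

lemma qmin_power_lower:
  fixes N :: nat
  assumes \<eta>: "0 \<le> \<eta>" "\<eta> * (- ln qmin) \<le> \<delta>" and H: "real H \<le> \<eta> * N + 1"
  shows "qmin^2 * exp (- \<delta> * N) \<le> qmin ^ (H + 1)"
proof -
  define L where "L = - ln qmin"
  have L: "L \<ge> 0" using qmin_pos qmin_le1 unfolding L_def by simp
  have qmin_pow: "qmin ^ n = exp (- L * n)" for n
  proof -
    have "exp (- L * n) = exp (ln qmin) ^ n" by (simp add: L_def exp_of_nat_mult[symmetric] mult.commute)
    then show ?thesis using qmin_pos by simp
  qed
  have "L * H \<le> L * (\<eta> * N + 1)" using mult_left_mono[OF H L] .
  moreover have "\<eta> * L * N \<le> \<delta> * N" using mult_right_mono[OF \<eta>(2)[folded L_def], of "real N"] by simp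
  ultimately have "- L * 2 - \<delta> * N \<le> - L * (H + 1)" by (simp add: algebra_simps)
  then show ?thesis unfolding qmin_pow by (simp add: exp_add[symmetric])
qed

lemma sum_mass_lower:
  assumes \<delta>: "\<delta> > 0"
  shows "\<exists>N0. \<forall>N\<ge>N0. qmin^2 * exp (- \<delta> * N) / (2 * (real N + 3))
           \<le> (\<Sum>w\<in>{w\<in>words D N. sum_list w + 1 = N}. word_prob q w)"
proof -
  define L where "L = - ln qmin"
  have L: "L \<ge> 0" using qmin_pos qmin_le1 unfolding L_def by simp
  define \<eta> where "\<eta> = min (1/4) (\<delta> / (L + 1))"
  have \<eta>_pos: "\<eta> > 0" unfolding \<eta>_def using \<delta> L by simp
  have \<eta>_le: "\<eta> \<le> 1/4" unfolding \<eta>_def by (rule min.cobounded1)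
  have "\<eta> \<le> \<delta> / (L + 1)" unfolding \<eta>_def by (rule min.cobounded2)
  then have "\<eta> * (L + 1) \<le> \<delta>" using L by (simp add: pos_le_divide_eq)
  then have \<eta>L: "\<eta> * L \<le> \<delta>" using \<eta>_pos by (simp add: algebra_simps)
  define N0 where "N0 = max 8 (nat \<lceil>2 * variance / \<eta>^2\<rceil>)"
  have "qmin^2 * exp (- \<delta> * N) / (2 * (real N + 3))
          \<le> (\<Sum>w\<in>{w\<in>words D N. sum_list w + 1 = N}. word_prob q w)" if N: "N \<ge> N0" for N
  proof -
    have "8 \<le> N" and "2 * variance / \<eta>^2 \<le> N" using N unfolding N0_def by auto
    then obtain H where H: "0 < H" "H + 1 \<le> N" "real H \<le> \<eta> * N + 1" "real H \<le> N / 4 + 1"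
      and small: "real (N - (H + 1)) * variance \<le> real H ^ 2 / 2"
      using window_size[OF variance_nonneg \<eta>_pos \<eta>_le] by blast
    have num: "qmin^2 * exp (- \<delta> * N) \<le> qmin ^ (H + 1)"
      using qmin_power_lower[OF less_imp_le[OF \<eta>_pos] _ H(3)] \<eta>L unfolding L_def by blast
    have den: "2 * (2 * real H + 1) \<le> 2 * (real N + 3)" using H(4) by simp
    have "qmin^2 * exp (- \<delta> * N) / (2 * (real N + 3)) \<le> qmin ^ (H + 1) / (2 * (2 * real H + 1))"
      using num den qmin_pos by (intro frac_le) auto
    also have "\<dots> \<le> (\<Sum>w\<in>{w\<in>words D N. sum_list w + 1 = N}. word_prob q w)"
      by (rule sum_mass_lower_at[OF H(1,2) small])
    finally show ?thesis .
  qed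
  then show ?thesis by blast
qed

lemma tree_word_mass_lower:
  assumes \<delta>: "\<delta> > 0"
  shows "\<exists>C>0. \<exists>N0. \<forall>N\<ge>N0. C * exp (- \<delta> * N) / real N ^ 2
           \<le> (\<Sum>w\<in>{w\<in>words D N. forest_word 1 w}. word_prob q w)"
proof -
  obtain N0 where N0: "\<And>N. N \<ge> N0 \<Longrightarrow> qmin^2 * exp (- \<delta> * N) / (2 * (real N + 3))
      \<le> (\<Sum>w\<in>{w\<in>words D N. sum_list w + 1 = N}. word_prob q w)"
    using sum_mass_lower[OF \<delta>] by blast
  have "qmin^2 / 8 * exp (- \<delta> * N) / real N ^ 2
          \<le> (\<Sum>w\<in>{w\<in>words D N. forest_word 1 w}. word_prob q w)" if N: "N \<ge> max N0 1" for N
  proof -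
    have "2 * (real N + 3) * N \<le> 8 * real N ^ 2" using N by (simp add: power2_eq_square)
    then have "qmin^2 / 8 * exp (- \<delta> * N) / real N ^ 2 \<le> qmin^2 * exp (- \<delta> * N) / (2 * (real N + 3)) / N"
      using N qmin_pos by (simp add: frac_le divide_divide_eq_left)
    also have "\<dots> \<le> (\<Sum>w\<in>{w\<in>words D N. sum_list w + 1 = N}. word_prob q w) / N"
      using N0[of N] N by (intro divide_right_mono) auto
    also have "\<dots> \<le> (\<Sum>w\<in>{w\<in>words D N. forest_word 1 w}. word_prob q w)"
      using tree_word_mass_ge[of N] N by (simp add: divide_le_eq mult.commute)
    finally show ?thesis .
  qed
  moreover have "qmin^2 / 8 > 0" using qmin_pos by simp
  ultimately show ?thesis by blast
qed

end

lemma power_exp_decay: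
  fixes c :: real
  assumes "c > 0"
  shows "(\<lambda>N. real N ^ k * exp (- c * N)) \<longlonglongrightarrow> 0"
proof -
  have "filterlim (\<lambda>N. c * real N) at_top sequentially"
    using assms by (intro filterlim_tendsto_pos_mult_at_top[OF tendsto_const] filterlim_real_sequentially)
  from filterlim_compose[OF tendsto_power_div_exp_0 this, of k]
  have "(\<lambda>N. (c * real N) ^ k / exp (c * real N)) \<longlonglongrightarrow> 0" by (simp add: o_def)
  then have lim: "(\<lambda>N. (c * real N) ^ k / exp (c * real N) / c ^ k) \<longlonglongrightarrow> 0"
    by (rule tendsto_divide_zero)
  have "(\<lambda>N. (c * real N) ^ k / exp (c * real N) / c ^ k) = (\<lambda>N. real N ^ k * exp (- c * N))"
    using assms by (intro ext) (simp add: power_mult_distrib exp_minus field_simps)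
  then show ?thesis using lim by simp
qed

(* For D >= 2 and positive weights some tilt theta^k makes the mean equal to 1: the tilted
   mean minus one changes sign on [0, 1 + wt 0 / wt D]. *)
lemma exists_critical_tilt:
  fixes wt :: "nat \<Rightarrow> real"
  assumes D: "D \<ge> 2" and wt: "\<And>k. k \<le> D \<Longrightarrow> wt k > 0"
  shows "\<exists>\<theta>>0. (\<Sum>k\<le>D. (real k - 1) * wt k * \<theta>^k) = 0"
proof -
  define g where "g \<theta> = (\<Sum>k\<le>D. (real k - 1) * wt k * \<theta>^k)" for \<theta> :: real
  obtain D' where D': "D = Suc D'" using D by (cases D) auto
  have g_shift: "g \<theta> = - wt 0 + (\<Sum>i\<le>D'. real i * wt (Suc i) * \<theta>^(Suc i))" for \<theta>
    unfolding g_def D' by (subst sum.atMost_Suc_shift) simp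
  have g0: "g 0 < 0" using wt[of 0] unfolding g_shift by simp
  define \<theta>1 where "\<theta>1 = 1 + wt 0 / wt D"
  have wD: "wt D > 0" and w0: "wt 0 > 0" using wt by auto
  have wt_nonneg: "wt k \<ge> 0" if "k \<le> D" for k using wt[OF that] by simp
  have \<theta>1: "\<theta>1 \<ge> 1" using w0 wD unfolding \<theta>1_def by simp
  have "real D' * wt (Suc D') * \<theta>1^(Suc D') \<le> (\<Sum>i\<le>D'. real i * wt (Suc i) * \<theta>1^(Suc i))"
    by (rule member_le_sum) (use wt_nonneg \<theta>1 D' in \<open>auto intro!: mult_nonneg_nonneg\<close>)
  moreover have "wt D * \<theta>1 \<le> real D' * wt D * \<theta>1^D"
  proof -
    have "1 * \<theta>1 \<le> real D' * \<theta>1^D"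
      using \<theta>1 D D' power_increasing[of 1 D \<theta>1] by (intro mult_mono) auto
    then show ?thesis using wD by (simp add: mult.assoc mult.left_commute)
  qed
  moreover have "wt D * \<theta>1 = wt D + wt 0" using wD unfolding \<theta>1_def by (simp add: field_simps)
  ultimately have g1: "g \<theta>1 > 0" unfolding g_shift using D' wD by simp
  have "continuous_on {0..\<theta>1} g" unfolding g_def by (intro continuous_intros)
  then obtain x where x: "0 \<le> x" "x \<le> \<theta>1" "g x = 0"
    using IVT'[of g 0 0 \<theta>1] g0 g1 \<theta>1 by auto
  then have "x > 0" using g0 by (cases "x = 0") auto
  then show ?thesis using x unfolding g_def by blast
qed

definition entropy_term :: "real \<Rightarrow> real" where
  "entropy_term x = (if x = 0 then 0 else x * ln x)"

lemma gibbs_term_nonneg: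
  assumes y: "y > 0" and x: "x \<ge> 0"
  shows "entropy_term x - x * ln y - x + y \<ge> 0"
proof (cases "x = 0")
  case False
  then have xp: "x > 0" using x by simp
  have "x * ln (y / x) \<le> x * (y / x - 1)"
    using xp y by (intro mult_left_mono ln_le_minus_one) auto
  moreover have "x * ln (y / x) = x * ln y - x * ln x" "x * (y / x - 1) = y - x"
    using xp y by (simp_all add: ln_div field_simps)
  ultimately show ?thesis using False by (simp add: entropy_term_def)
qed (use y in \<open>simp add: entropy_term_def\<close>)

lemma gibbs_term_eq_0:
  assumes y: "y > 0" and x: "x \<ge> 0" and z: "entropy_term x - x * ln y - x + y = 0"
  shows "x = y"
proof (cases "x = 0")
  case False
  then have xp: "x > 0" using x by simp
  have "x * (ln (y / x) - (y / x - 1)) = 0"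
    using z xp y False by (simp add: entropy_term_def ln_div field_simps)
  then have "ln (y / x) = y / x - 1" using xp by simp
  then have "y / x = 1" using xp y by (intro ln_eq_minus_one) auto
  then show ?thesis using xp by simp
qed (use y z in \<open>simp add: entropy_term_def\<close>)

lemma Jfun_tilted:
  fixes q c r :: "nat \<Rightarrow> real" and \<beta> A B :: real
  assumes q_exp: "\<And>k. k \<le> D \<Longrightarrow> \<beta> * c k = - ln (q k) + real k * A + B"
    and r_sum: "(\<Sum>k\<le>D. r k) = 1" and r_mean: "(\<Sum>k\<le>D. real k * r k) = 1"
  shows "Jfun \<beta> c D r = (\<Sum>k\<le>D. entropy_term (r k) - r k * ln (q k)) + A + B"
proof -
  have "\<beta> * (\<Sum>k\<le>D. r k * c k) = (\<Sum>k\<le>D. r k * (- ln (q k) + real k * A + B))"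
    unfolding sum_distrib_left
  proof (rule sum.cong)
    fix k assume "k \<in> {..D}"
    then show "\<beta> * (r k * c k) = r k * (- ln (q k) + real k * A + B)"
      using q_exp[of k] by (simp add: mult.left_commute[of \<beta>])
  qed simp
  also have "\<dots> = (\<Sum>k\<le>D. - (r k * ln (q k)) + A * (real k * r k) + B * r k)"
    by (intro sum.cong) (auto simp: algebra_simps)
  also have "\<dots> = - (\<Sum>k\<le>D. r k * ln (q k)) + A * (\<Sum>k\<le>D. real k * r k) + B * (\<Sum>k\<le>D. r k)"
    by (simp only: sum.distrib sum_negf sum_distrib_left)
  finally show ?thesis
    using r_sum r_mean by (simp add: Jfun_def entropy_term_def sum_subtractf)
qed

lemma minimizer_eq_tilted:
  fixes q p c :: "nat \<Rightarrow> real" and \<beta> A B :: real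
  assumes q_pos: "\<And>k. k \<le> D \<Longrightarrow> q k > 0"
    and q_sum: "(\<Sum>k\<le>D. q k) = 1" and q_mean: "(\<Sum>k\<le>D. real k * q k) = 1"
    and q_exp: "\<And>k. k \<le> D \<Longrightarrow> \<beta> * c k = - ln (q k) + real k * A + B"
    and p: "p \<in> Mset D" and le: "Jfun \<beta> c D p \<le> Jfun \<beta> c D q"
    and k: "k \<le> D"
  shows "p k = q k"
proof -
  have p_sum: "(\<Sum>k\<le>D. p k) = 1" and p_mean: "(\<Sum>k\<le>D. real k * p k) = 1"
    and p_nonneg: "\<And>k. k \<le> D \<Longrightarrow> p k \<ge> 0"
    using p unfolding Mset_def by auto
  let ?g = "\<lambda>k. entropy_term (p k) - p k * ln (q k) - p k + q k"
  have "(\<Sum>k\<le>D. entropy_term (q k) - q k * ln (q k)) = 0"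
    using q_pos by (intro sum.neutral) (auto simp: entropy_term_def dest: less_imp_neq[symmetric])
  then have "(\<Sum>k\<le>D. ?g k) = Jfun \<beta> c D p - Jfun \<beta> c D q"
    using Jfun_tilted[OF q_exp p_sum p_mean] Jfun_tilted[OF q_exp q_sum q_mean] p_sum q_sum
    by (simp add: sum.distrib sum_subtractf)
  then have "(\<Sum>k\<le>D. ?g k) \<le> 0" using le by simp
  moreover have g_nonneg: "\<forall>k\<in>{..D}. ?g k \<ge> 0"
    using gibbs_term_nonneg q_pos p_nonneg by auto
  ultimately have "\<forall>k\<in>{..D}. ?g k = 0"
    using sum_nonneg_eq_0_iff[of "{..D}" ?g] sum_nonneg[of "{..D}" ?g] by auto
  then show ?thesis using gibbs_term_eq_0 q_pos p_nonneg k by auto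
qed

lemma word_prob_tilted:
  fixes \<theta> Z \<beta> :: real
  assumes q: "\<And>k. k \<le> D \<Longrightarrow> q k = exp (- \<beta> * c k) * \<theta>^k / Z" and "set w \<subseteq> {..D}"
  shows "word_prob q w = exp (- \<beta> * sum_list (map c w)) * \<theta>^(sum_list w) / Z^(length w)"
  using assms(2)
proof (induction w)
  case (Cons x w)
  have "exp (- \<beta> * sum_list (map c (x # w))) = exp (- \<beta> * c x) * exp (- \<beta> * sum_list (map c w))"
    by (simp only: list.map sum_list.Cons distrib_left exp_add)
  then show ?case using Cons by (simp add: word_prob_def q power_add)
qed (simp add: word_prob_def)

lemma sum_count_list:
  fixes w :: "nat list"
  assumes "set w \<subseteq> {..D}"
  shows "(\<Sum>k\<le>D. f k * real (count_list w k)) = sum_list (map f w)"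
  using assms
proof (induction w)
  case (Cons x w)
  have "(\<Sum>k\<le>D. f k * real (count_list (x # w) k)) = (\<Sum>k\<le>D. (if k = x then f k else 0) + f k * real (count_list w k))"
    by (intro sum.cong) (auto simp: algebra_simps)
  also have "\<dots> = f x + (\<Sum>k\<le>D. f k * real (count_list w k))"
    using Cons.prems by (simp add: sum.distrib)
  finally show ?case using Cons by simp
qed simp

(* The Gibbs measure is the product measure of a tilted law conditioned on being a tree:
  every tree of size N has product weight equal to its Boltzmann weight times a constant. *)
lemma gibbs_prob_conditioned:
  fixes \<theta> Z \<beta> :: real
  assumes \<theta>: "\<theta> > 0" and Z: "Z > 0" and q: "\<And>k. k \<le> D \<Longrightarrow> q k = exp (- \<beta> * c k) * \<theta>^k / Z"
  shows "gibbs_prob \<beta> c D N A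
           = (\<Sum>T\<in>trees N D \<inter> A. word_prob q (luk T)) / (\<Sum>T\<in>trees N D. word_prob q (luk T))"
proof -
  define K where "K = \<theta>^(N - 1) / Z^N"
  have K: "K > 0" unfolding K_def using \<theta> Z by simp
  have weight: "word_prob q (luk T) = exp (- \<beta> * energy c D T) * K" if T: "T \<in> trees N D" for T
  proof -
    have set: "set (luk T) \<subseteq> {..D}" and len: "length (luk T) = N" and sum: "sum_list (luk T) = N - 1"
      using T length_luk[of T] sum_luk[of T] by (auto simp: trees_def deg_le_luk)
    have "energy c D T = sum_list (map c (luk T))"
      unfolding energy_def chi_luk using sum_count_list[OF set, of c] by simp
    then show ?thesis using word_prob_tilted[OF q set] len sum unfolding K_def by simp
  qed
  have scaled: "(\<Sum>T\<in>trees N D \<inter> B. word_prob q (luk T)) = (\<Sum>T\<in>trees N D \<inter> B. exp (- \<beta> * energy c D T)) * K" for B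
    unfolding sum_distrib_right using weight by (intro sum.cong) auto
  show ?thesis using scaled[of A] scaled[of UNIV] K unfolding gibbs_prob_def by simp
qed

context critical_law_pos begin

lemma bad_trees_mass:
  assumes N: "N > 0" and t: "0 \<le> t" "t \<le> 1" "2 * t \<le> \<epsilon>"
  shows "(\<Sum>T\<in>trees N D \<inter> {T. \<exists>k\<le>D. \<bar>real (chi k T) / N - q k\<bar> > \<epsilon>}. word_prob q (luk T))
           \<le> 2 * (D + 1) * exp (- (N * t^2))"
proof -
  let ?A = "trees N D \<inter> {T. \<exists>k\<le>D. \<bar>real (chi k T) / N - q k\<bar> > \<epsilon>}"
  let ?B = "{w\<in>words D N. \<exists>k\<le>D. \<bar>real (count_list w k) / N - q k\<bar> > \<epsilon>}"
  have "(\<Sum>T\<in>?A. word_prob q (luk T)) = (\<Sum>w\<in>luk ` ?A. word_prob q w)"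
    by (simp add: sum.reindex inj_on_subset[OF inj_luk])
  also have "\<dots> \<le> (\<Sum>w\<in>?B. word_prob q w)"
    by (rule sum_mono2) (auto simp: chi_luk luk_trees intro: word_prob_nonneg)
  also have "\<dots> \<le> 2 * (D + 1) * exp (- (N * t^2))"
    by (rule frequency_deviation[OF N t])
  finally show ?thesis .
qed

lemma trees_mass_ge:
  "(\<Sum>w\<in>{w\<in>words D N. forest_word 1 w}. word_prob q w) \<le> (\<Sum>T\<in>trees N D. word_prob q (luk T))"
proof -
  have "(\<Sum>w\<in>{w\<in>words D N. forest_word 1 w}. word_prob q w) \<le> (\<Sum>w\<in>luk ` trees N D. word_prob q w)"
    using tree_words_luk finite_trees by (intro sum_mono2) (auto intro: word_prob_nonneg luk_trees)
  also have "\<dots> = (\<Sum>T\<in>trees N D. word_prob q (luk T))"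
    by (simp add: sum.reindex inj_on_subset[OF inj_luk])
  finally show ?thesis .
qed

(* Under the product law conditioned on being a tree word, the letter frequencies concentrate
  at q: the deviations are exponentially rare while trees are only subexponentially rare. *)
lemma conditioned_concentration:
  assumes \<epsilon>: "\<epsilon> > 0"
  shows "(\<lambda>N. (\<Sum>T\<in>trees N D \<inter> {T. \<exists>k\<le>D. \<bar>real (chi k T) / N - q k\<bar> > \<epsilon>}. word_prob q (luk T))
              / (\<Sum>T\<in>trees N D. word_prob q (luk T))) \<longlonglongrightarrow> 0"
proof -
  define t where "t = min \<epsilon> 1 / 2"
  have t: "0 \<le> t" "t \<le> 1" "2 * t \<le> \<epsilon>" "t > 0" using \<epsilon> unfolding t_def by auto
  obtain C N0 where C: "C > 0" and N0: "\<And>N. N \<ge> N0 \<Longrightarrow> C * exp (- (t^2 / 2) * N) / real N ^ 2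
      \<le> (\<Sum>w\<in>{w\<in>words D N. forest_word 1 w}. word_prob q w)"
    using tree_word_mass_lower[of "t^2 / 2"] t by auto
  let ?bound = "\<lambda>N. 2 * (D + 1) / C * (real N ^ 2 * exp (- (t^2 / 2) * N))"
  have bound: "(\<Sum>T\<in>trees N D \<inter> {T. \<exists>k\<le>D. \<bar>real (chi k T) / N - q k\<bar> > \<epsilon>}. word_prob q (luk T))
      / (\<Sum>T\<in>trees N D. word_prob q (luk T)) \<le> ?bound N" if N: "N \<ge> max N0 1" for N
  proof -
    have den: "C * exp (- (t^2 / 2) * N) / real N ^ 2 \<le> (\<Sum>T\<in>trees N D. word_prob q (luk T))"
      using N0[of N] trees_mass_ge[of N] N by linarith
    have "(\<Sum>T\<in>trees N D \<inter> {T. \<exists>k\<le>D. \<bar>real (chi k T) / N - q k\<bar> > \<epsilon>}. word_prob q (luk T))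
        / (\<Sum>T\<in>trees N D. word_prob q (luk T))
        \<le> 2 * (D + 1) * exp (- (N * t^2)) / (C * exp (- (t^2 / 2) * N) / real N ^ 2)"
      using bad_trees_mass[OF _ t(1-3), of N] den C N by (intro frac_le) auto
    also have "\<dots> = ?bound N"
      using C N by (simp add: field_simps exp_add[symmetric] power2_eq_square)
    finally show ?thesis .
  qed
  have lim: "?bound \<longlonglongrightarrow> 0"
    using t by (intro tendsto_mult_right_zero power_exp_decay) simp
  have nonneg: "0 \<le> (\<Sum>T\<in>trees N D \<inter> A. word_prob q (luk T)) / (\<Sum>T\<in>trees N D. word_prob q (luk T))" for N A
    by (intro divide_nonneg_nonneg sum_nonneg word_prob_nonneg luk_trees) auto
  show ?thesis
    by (rule real_tendsto_sandwich[OF _ _ tendsto_const lim])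
      (use nonneg bound in \<open>auto intro: eventually_sequentiallyI[of "max N0 1"]\<close>)
qed

end

lemma critical_tilt:
  assumes D: "D \<ge> 2"
  obtains \<theta> Z where "\<theta> > 0" "Z > 0" "critical_law_pos D (\<lambda>k. exp (- \<beta> * c k) * \<theta>^k / Z)"
proof -
  define wt where "wt k = exp (- \<beta> * c k)" for k
  obtain \<theta> where \<theta>: "\<theta> > 0" "(\<Sum>k\<le>D. (real k - 1) * wt k * \<theta>^k) = 0"
    using exists_critical_tilt[OF D, of wt] unfolding wt_def by auto
  define Z where "Z = (\<Sum>k\<le>D. wt k * \<theta>^k)"
  have Z: "Z > 0" unfolding Z_def wt_def using \<theta> by (intro sum_pos) auto
  define q where "q k = wt k * \<theta>^k / Z" for k
  have q_pos: "q k > 0" for k unfolding q_def wt_def using \<theta> Z by simp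
  have q_sum: "(\<Sum>k\<le>D. q k) = 1"
    unfolding q_def using Z by (simp add: Z_def sum_divide_distrib[symmetric])
  have "(\<Sum>k\<le>D. real k * (wt k * \<theta>^k)) - Z = 0"
    using \<theta>(2) unfolding Z_def by (simp add: sum_subtractf[symmetric] algebra_simps)
  then have q_mean: "(\<Sum>k\<le>D. real k * q k) = 1"
    unfolding q_def using Z by (simp add: sum_divide_distrib[symmetric] mult.assoc)
  have "critical_law_pos D q"
    by unfold_locales (use q_pos q_sum q_mean D in \<open>auto intro: less_imp_le\<close>)
  then show thesis using that \<theta>(1) Z unfolding q_def wt_def by blast
qed

(* The theorem for D >= 2: the minimiser p is the tilted critical law. *)
lemma concentration_D_ge2:
  assumes D: "D \<ge> 2" and p: "p \<in> Mset D" and p_min: "\<forall>q\<in>Mset D. Jfun \<beta> c D p \<le> Jfun \<beta> c D q"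
    and \<epsilon>: "\<epsilon> > 0"
  shows "(\<lambda>N. gibbs_prob \<beta> c D N {T. \<exists>k\<le>D. \<bar>real (chi k T) / real N - p k\<bar> > \<epsilon>}) \<longlonglongrightarrow> 0"
proof -
  obtain \<theta> Z where \<theta>: "\<theta> > 0" and Z: "Z > 0"
    and law: "critical_law_pos D (\<lambda>k. exp (- \<beta> * c k) * \<theta>^k / Z)"
    using critical_tilt[OF D] .
  define q where "q k = exp (- \<beta> * c k) * \<theta>^k / Z" for k
  interpret critical_law_pos D q using law unfolding q_def .
  have q_pos: "q k > 0" for k unfolding q_def using \<theta> Z by simp
  have q_exp: "\<beta> * c k = - ln (q k) + real k * ln \<theta> + (- ln Z)" for k
    using \<theta> Z by (simp add: q_def ln_div ln_mult ln_realpow)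
  have "q \<in> Mset D" unfolding Mset_def using q_sum q_mean q_nonneg q_le1 by auto
  then have p_eq_q: "p k = q k" if "k \<le> D" for k
    using minimizer_eq_tilted[OF _ q_sum q_mean q_exp p _ that] q_pos p_min by blast
  have "{T. \<exists>k\<le>D. \<bar>real (chi k T) / real N - p k\<bar> > \<epsilon>} = {T. \<exists>k\<le>D. \<bar>real (chi k T) / real N - q k\<bar> > \<epsilon>}" for N
    using p_eq_q by auto
  moreover have "gibbs_prob \<beta> c D N A
      = (\<Sum>T\<in>trees N D \<inter> A. word_prob q (luk T)) / (\<Sum>T\<in>trees N D. word_prob q (luk T))" for N A
    by (rule gibbs_prob_conditioned[OF \<theta> Z]) (simp add: q_def)
  ultimately show ?thesis using conditioned_concentration[OF \<epsilon>] by simp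
qed

lemma path_counts: "deg_le 1 T \<Longrightarrow> chi 0 T = 1 \<and> chi 1 T = nverts T - 1"
proof (induction T)
  case (Node ts)
  then consider "ts = []" | t where "ts = [t]" by (auto simp: length_Suc_conv le_Suc_eq)
  then show ?case
  proof cases
    case 2
    moreover have "nverts t \<ge> 1" by (cases t) simp
    ultimately show ?thesis using Node by auto
  qed simp
qed

lemma concentration_D1:
  assumes p: "p \<in> Mset 1" and \<epsilon>: "\<epsilon> > 0"
  shows "(\<lambda>N. gibbs_prob \<beta> c 1 N {T. \<exists>k\<le>1. \<bar>real (chi k T) / real N - p k\<bar> > \<epsilon>}) \<longlonglongrightarrow> 0"
proof (rule tendsto_eventually)
  have p01: "p 0 = 0" "p 1 = 1" using p unfolding Mset_def by (auto simp: atMost_Suc)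
  obtain M :: nat where M: "1 / \<epsilon> < M" using reals_Archimedean2 by blast
  have "trees N 1 \<inter> {T. \<exists>k\<le>1. \<bar>real (chi k T) / real N - p k\<bar> > \<epsilon>} = {}" if N: "N \<ge> max M 1" for N
  proof -
    have N_pos: "real N > 0" using N by simp
    have "real M * \<epsilon> \<le> real N * \<epsilon>" using N \<epsilon> by (intro mult_right_mono) auto
    moreover have "1 < real M * \<epsilon>" using M \<epsilon> by (simp add: divide_less_eq)
    ultimately have "1 < real N * \<epsilon>" by linarith
    then have small: "1 / real N < \<epsilon>" using N_pos by (simp add: divide_less_eq mult.commute)
    have "\<bar>real (chi k T) / real N - p k\<bar> = 1 / real N" if T: "T \<in> trees N 1" and k: "k \<le> 1" for T k
    proof -
      have "chi 0 T = 1" "real (chi 1 T) = real N - 1"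
        using path_counts[of T] T N by (auto simp: trees_def of_nat_diff)
      then show ?thesis using k p01 N_pos by (cases k) (auto simp: diff_divide_distrib)
    qed
    then show ?thesis using small by auto
  qed
  then show "\<forall>\<^sub>F N in sequentially. gibbs_prob \<beta> c 1 N {T. \<exists>k\<le>1. \<bar>real (chi k T) / real N - p k\<bar> > \<epsilon>} = 0"
    unfolding gibbs_prob_def by (intro eventually_sequentiallyI[of "max M 1"]) simp
qed

(* The main theorem. *)
theorem corollary2:
  fixes D :: nat and \<beta> :: real and c :: "nat \<Rightarrow> real" and p :: "nat \<Rightarrow> real"
  assumes "D \<ge> 1" and "\<beta> > 0"
    and "p \<in> Mset D" and "\<forall>q\<in>Mset D. Jfun \<beta> c D p \<le> Jfun \<beta> c D q"
  shows "\<forall>\<epsilon>>0. (\<lambda>N. gibbs_prob \<beta> c D N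
            {T. \<exists>k\<le>D. \<bar>real (chi k T) / real N - p k\<bar> > \<epsilon>}) \<longlonglongrightarrow> 0"
proof (intro allI impI)
  fix \<epsilon> :: real assume "\<epsilon> > 0"
  show "(\<lambda>N. gibbs_prob \<beta> c D N {T. \<exists>k\<le>D. \<bar>real (chi k T) / real N - p k\<bar> > \<epsilon>}) \<longlonglongrightarrow> 0"
  proof (cases "D = 1")
    case True
    then show ?thesis using concentration_D1 assms(3) \<open>\<epsilon> > 0\<close> by simp
  next
    case False
    then show ?thesis using concentration_D_ge2 assms(1,3,4) \<open>\<epsilon> > 0\<close> by simp
  qed
qed

end
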